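(* Let $n\geq 3$ and consider the $n$-cycle scenario. A nondisturbing behavior $\{p_1,\dots,p_n\}$ for this scenario is logically contextual if and only if there exist an index $1\leq i\leq n$, a pair $(a,b)\in\{0,1\}^2$ and $(\alpha_1,\dots,\alpha_{n-2})\in\{0,1\}^{n-2}$ such that $p_i(a,b)>0$, $p_{i+1}(b,\alpha_1)=0$, $p_{i+j}(\lnot\alpha_{j-1},\alpha_j)=0$ for all $2\leq j\leq n-2$, and $p_{i+n-1}(\lnot\alpha_{n-2},a)=0$, where indices of $p$ are taken modulo $n$ (with values in $\{1,\dots,n\}$) and $\lnot x=1-x$.
   Context: The $n$-cycle scenario has measurements $M_1,\dots,M_n$, each with outcome set $O=\{0,1\}$, and contexts $C_i=\{M_i,M_{i+1}\}$, $i=1,\dots,n$, indices modulo $n$ (so $M_{n+1}=M_1$). A behavior is a family of probability distributions $p_i$ on $\{0,1\}^2$, where $p_i(x,y)$ is the probability that $M_i=x$ and $M_{i+1}=y$. It is nondisturbing if marginals agree on shared measurements: for every $i$ and $x\in\{0,1\}$, $\sum_y p_i(y,x)=\sum_y p_{i+1}(x,y)$. Let $\bar p_i(x,y)=1$ if $p_i(x,y)>0$ and $0$ otherwise. The behavior is logically noncontextual if there exists $\bar p:\{0,1\}^n\to\{0,1\}$ such that for every $i$ and $(x,y)$, $\max\{\bar p(t): t\in\{0,1\}^n,\ t_i=x,\ t_{i+1}=y\}=\bar p_i(x,y)$; otherwise it is logically contextual. *)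

theory Defs
  imports Complex_Main
begin

(* n-cycle scenario, measurements M_0,...,M_{n-1} (0-based, indices mod n),
   outcomes {0,1} represented by bool (False = 0, True = 1).
   p i x y = probability that M_i = x and M_{(i+1) mod n} = y. *)

definition behavior :: "nat \<Rightarrow> (nat \<Rightarrow> bool \<Rightarrow> bool \<Rightarrow> real) \<Rightarrow> bool" where
  "behavior n p \<longleftrightarrow>
     (\<forall>i<n. (\<forall>x y. p i x y \<ge> 0) \<and> (\<Sum>x\<in>UNIV. \<Sum>y\<in>UNIV. p i x y) = 1)"

definition nondisturbing :: "nat \<Rightarrow> (nat \<Rightarrow> bool \<Rightarrow> bool \<Rightarrow> real) \<Rightarrow> bool" where
  "nondisturbing n p \<longleftrightarrow>
     (\<forall>i<n. \<forall>x. (\<Sum>y\<in>UNIV. p i y x) = (\<Sum>y\<in>UNIV. p ((i + 1) mod n) x y))"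

definition supp_ind :: "(nat \<Rightarrow> bool \<Rightarrow> bool \<Rightarrow> real) \<Rightarrow> nat \<Rightarrow> bool \<Rightarrow> bool \<Rightarrow> nat" where
  "supp_ind p i x y = (if p i x y > 0 then 1 else 0)"

definition logically_noncontextual :: "nat \<Rightarrow> (nat \<Rightarrow> bool \<Rightarrow> bool \<Rightarrow> real) \<Rightarrow> bool" where
  "logically_noncontextual n p \<longleftrightarrow>
     (\<exists>pb :: bool list \<Rightarrow> nat. (\<forall>t. pb t \<in> {0, 1}) \<and>
        (\<forall>i<n. \<forall>x y.
           Max {pb t | t. length t = n \<and> t ! i = x \<and> t ! ((i + 1) mod n) = y}
             = supp_ind p i x y))"

definition logically_contextual :: "nat \<Rightarrow> (nat \<Rightarrow> bool \<Rightarrow> bool \<Rightarrow> real) \<Rightarrow> bool" where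
  "logically_contextual n p \<longleftrightarrow> \<not> logically_noncontextual n p"

end

(*
  A behavior is logically noncontextual exactly when every support point (i, a, b) of p_i
  extends to a global assignment all of whose restrictions to contexts lie in the supports.
  Cutting the cycle open at context i, such an extension is a walk from b to a through the
  layered graph whose layers are the supports of the contexts i + 1, ..., i + n - 1.
  Nondisturbance says that the targets of each layer are exactly the sources of the next, so
  if some reachable set were all of {0, 1}, every later source, a included, would be reachable.
  Hence, when a is unreachable, each reachable set is a singleton {beta_l}, and the missing
  edges from beta_l to not beta_(l+1) are the vanishing probabilities of the theorem, with
  alpha_j = not beta_j.
*)

theory Submission
  imports Defs
begin

lemma sum_pos_iff_ex_pos:
  fixes f :: "'a \<Rightarrow> 'b :: {ordered_comm_monoid_add, linorder}"
  assumes "finite A" and "\<And>x. x \<in> A \<Longrightarrow> 0 \<le> f x"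
  shows "0 < sum f A \<longleftrightarrow> (\<exists>x\<in>A. 0 < f x)"
proof
  assume "0 < sum f A"
  then have "\<not> (\<forall>x\<in>A. f x = 0)"
    using sum_nonneg_eq_0_iff[of A f] assms by auto
  with assms(2) show "\<exists>x\<in>A. 0 < f x"
    by (auto simp: order.strict_iff_order)
next
  assume "\<exists>x\<in>A. 0 < f x"
  with assms show "0 < sum f A"
    by (auto intro: sum_pos2)
qed

lemma Max_zero_one_valued:
  fixes f :: "'a \<Rightarrow> nat"
  assumes "\<forall>t. f t \<in> {0, 1}" and "\<exists>t. P t"
  shows "Max {f t |t. P t} = (if \<exists>t. P t \<and> f t = 1 then 1 else 0)"
proof -
  have sub: "{f t |t. P t} \<subseteq> {0, 1}"
    using assms(1) by (smt (verit) mem_Collect_eq subsetI)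
  then have fin: "finite {f t |t. P t}"
    by (rule finite_subset) simp
  show ?thesis
  proof (cases "\<exists>t. P t \<and> f t = 1")
    case True
    with sub fin show ?thesis
      by (intro Max_eqI) auto
  next
    case False
    with assms have "{f t |t. P t} = {0}"
      by fastforce
    with False show ?thesis by simp
  qed
qed

lemma bool_set_singleton:
  fixes A :: "bool set"
  assumes "A \<noteq> {}" and "A \<noteq> UNIV"
  shows "A = {True \<in> A}"
proof -
  have "False \<in> A \<longleftrightarrow> True \<notin> A"
  proof
    show "True \<notin> A" if "False \<in> A"
      using that assms(2) by (auto simp: UNIV_bool)
    show "False \<in> A" if "True \<notin> A"
      using that assms(1) by (metis (full_types) ex_in_conv)
  qed
  then show ?thesis
    by (simp add: set_eq_iff) (metis (full_types))
qed

lemma mod_rotate_inverse: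
  fixes j k n :: nat
  assumes "k < n"
  shows "(j + (k + n - j mod n) mod n) mod n = k"
proof -
  have "(j + (k + n - j mod n) mod n) mod n = (j mod n + (k + n - j mod n)) mod n"
    by (simp add: mod_simps)
  also have "j mod n + (k + n - j mod n) = k + n"
    using assms mod_less_divisor[of n j] by linarith
  finally show ?thesis using assms by simp
qed

lemma ex_list_rotated:
  fixes w :: "nat \<Rightarrow> 'a"
  assumes "0 < n"
  shows "\<exists>t. length t = n \<and> (\<forall>l<n. t ! ((j + l) mod n) = w l)"
proof -
  define t where "t = map (\<lambda>k. w ((k + n - j mod n) mod n)) [0..<n]"
  have "length t = n" by (simp add: t_def)
  moreover have "t ! ((j + l) mod n) = w l" if "l < n" for l
  proof -
    have "((j + l) mod n + n - j mod n) mod n = ((j + l) mod n + (n - j mod n)) mod n"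
      using assms by simp
    also have "\<dots> = (j mod n + l + (n - j mod n)) mod n"
      by (metis mod_add_left_eq)
    also have "j mod n + l + (n - j mod n) = l + n"
      using assms mod_less_divisor[of n j] by linarith
    finally have "((j + l) mod n + n - j mod n) mod n = l"
      using that by simp
    moreover have "(j + l) mod n < n"
      using assms by simp
    ultimately show ?thesis
      by (simp add: t_def)
  qed
  ultimately show ?thesis by blast
qed

section \<open>Reachability in layered graphs\<close>

fun reach :: "(nat \<Rightarrow> 'a \<Rightarrow> 'a \<Rightarrow> bool) \<Rightarrow> 'a \<Rightarrow> nat \<Rightarrow> 'a set" where
  "reach E b 0 = {b}"
| "reach E b (Suc l) = {y. \<exists>x\<in>reach E b l. E l x y}"

lemma reach_iff_walk:
  "y \<in> reach E b l \<longleftrightarrow> (\<exists>w. w 0 = b \<and> w l = y \<and> (\<forall>k<l. E k (w k) (w (Suc k))))"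
proof (induction l arbitrary: y)
  case 0
  then show ?case by auto
next
  case (Suc l)
  show ?case
  proof
    assume "y \<in> reach E b (Suc l)"
    then obtain x where "x \<in> reach E b l" and xy: "E l x y" by auto
    then obtain w where w: "w 0 = b" "w l = x" "\<forall>k<l. E k (w k) (w (Suc k))"
      using Suc.IH by blast
    have "\<forall>k<Suc l. E k ((w(Suc l := y)) k) ((w(Suc l := y)) (Suc k))"
      using w xy by (auto simp: less_Suc_eq)
    with w show "\<exists>w. w 0 = b \<and> w (Suc l) = y \<and> (\<forall>k<Suc l. E k (w k) (w (Suc k)))"
      by (intro exI[of _ "w(Suc l := y)"]) simp
  next
    assume "\<exists>w. w 0 = b \<and> w (Suc l) = y \<and> (\<forall>k<Suc l. E k (w k) (w (Suc k)))"
    then obtain w where w: "w 0 = b" "w (Suc l) = y" "\<forall>k<Suc l. E k (w k) (w (Suc k))"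
      by blast
    then have "w l \<in> reach E b l"
      unfolding Suc.IH by (intro exI[of _ w]) simp
    with w show "y \<in> reach E b (Suc l)" by auto
  qed
qed

(* Nondisturbance, read on supports. *)
definition layers_match :: "(nat \<Rightarrow> 'a \<Rightarrow> 'a \<Rightarrow> bool) \<Rightarrow> bool" where
  "layers_match E \<longleftrightarrow> (\<forall>l x. (\<exists>u. E l u x) \<longleftrightarrow> (\<exists>z. E (Suc l) x z))"

lemma reach_subset_sources:
  assumes "layers_match E" and "\<exists>z. E 0 b z" and "x \<in> reach E b l"
  shows "\<exists>z. E l x z"
  using assms(3)
proof (induction l arbitrary: x)
  case 0
  with assms(2) show ?case by simp
next
  case (Suc l)
  then obtain u where "E l u x" by auto
  with assms(1) show ?case unfolding layers_match_def by blast
qed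

lemma reach_nonempty:
  assumes "layers_match E" and "\<exists>z. E 0 b z"
  shows "reach E b l \<noteq> {}"
proof (induction l)
  case 0
  show ?case by simp
next
  case (Suc l)
  then obtain x where "x \<in> reach E b l" by blast
  moreover from this obtain z where "E l x z"
    using reach_subset_sources[OF assms] by blast
  ultimately show ?case by auto
qed

lemma sources_subset_reach_propagate:
  assumes "layers_match E" and "{x. \<exists>z. E l x z} \<subseteq> reach E b l"
  shows "{x. \<exists>z. E (l + d) x z} \<subseteq> reach E b (l + d)"
proof (induction d)
  case 0
  from assms(2) show ?case by simp
next
  case (Suc d)
  show ?case
  proof
    fix x assume "x \<in> {x. \<exists>z. E (l + Suc d) x z}"
    then have "\<exists>z. E (Suc (l + d)) x z" by simp
    then obtain u where "E (l + d) u x"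
      using assms(1) unfolding layers_match_def by blast
    with Suc.IH show "x \<in> reach E b (l + Suc d)" by auto
  qed
qed

definition forced_path :: "(nat \<Rightarrow> bool \<Rightarrow> bool \<Rightarrow> bool) \<Rightarrow> nat \<Rightarrow> (nat \<Rightarrow> bool) \<Rightarrow> bool" where
  "forced_path E m \<beta> \<longleftrightarrow> (\<forall>k<m. \<not> E k (\<beta> k) (\<not> \<beta> (Suc k)))"

lemma reach_subset_forced_path:
  assumes "forced_path E m \<beta>" and "l \<le> m"
  shows "reach E (\<beta> 0) l \<subseteq> {\<beta> l}"
  using assms(2)
proof (induction l)
  case 0
  show ?case by simp
next
  case (Suc l)
  then have IH: "reach E (\<beta> 0) l \<subseteq> {\<beta> l}" and "\<not> E l (\<beta> l) (\<not> \<beta> (Suc l))"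
    using assms(1) unfolding forced_path_def by auto
  show ?case
  proof
    fix y assume "y \<in> reach E (\<beta> 0) (Suc l)"
    with IH have "E l (\<beta> l) y" by auto
    with \<open>\<not> E l (\<beta> l) (\<not> \<beta> (Suc l))\<close> show "y \<in> {\<beta> (Suc l)}"
      by (cases y; cases "\<beta> (Suc l)") auto
  qed
qed

lemma not_reach_iff_forced_path:
  fixes E :: "nat \<Rightarrow> bool \<Rightarrow> bool \<Rightarrow> bool"
  assumes match: "layers_match E" and b: "\<exists>z. E 0 b z" and a: "\<exists>z. E m a z"
  shows "a \<notin> reach E b m \<longleftrightarrow> (\<exists>\<beta>. \<beta> 0 = b \<and> \<beta> m = (\<not> a) \<and> forced_path E m \<beta>)"
proof
  assume a_unreached: "a \<notin> reach E b m"
  define \<beta> where "\<beta> l = (True \<in> reach E b l)" for l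
  have reach_singleton: "reach E b l = {\<beta> l}" if "l \<le> m" for l
    unfolding \<beta>_def
  proof (rule bool_set_singleton)
    show "reach E b l \<noteq> {}" using reach_nonempty[OF match b] .
    show "reach E b l \<noteq> UNIV"
      \<comment> \<open>a full layer would make every later source reachable, a at layer m included\<close>
    proof
      assume "reach E b l = UNIV"
      then have "{x. \<exists>z. E (l + (m - l)) x z} \<subseteq> reach E b (l + (m - l))"
        by (intro sources_subset_reach_propagate[OF match]) simp
      with a a_unreached \<open>l \<le> m\<close> show False by auto
    qed
  qed
  have "\<beta> 0 = b"
    using reach_singleton[of 0] by simp
  moreover have "\<beta> m = (\<not> a)"
    using reach_singleton[of m] a_unreached by auto
  moreover have "forced_path E m \<beta>"
    unfolding forced_path_def
  proof (intro allI impI notI)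
    fix k assume "k < m" and "E k (\<beta> k) (\<not> \<beta> (Suc k))"
    then have "(\<not> \<beta> (Suc k)) \<in> reach E b (Suc k)"
      using reach_singleton[of k] by auto
    with reach_singleton[of "Suc k"] \<open>k < m\<close> show False
      by auto
  qed
  ultimately show "\<exists>\<beta>. \<beta> 0 = b \<and> \<beta> m = (\<not> a) \<and> forced_path E m \<beta>"
    by blast
next
  assume "\<exists>\<beta>. \<beta> 0 = b \<and> \<beta> m = (\<not> a) \<and> forced_path E m \<beta>"
  then obtain \<beta> where "\<beta> 0 = b" "\<beta> m = (\<not> a)" "forced_path E m \<beta>"
    by blast
  then have "reach E b m \<subseteq> {\<not> a}"
    using reach_subset_forced_path[of E m \<beta> m] by simp
  then show "a \<notin> reach E b m" by auto
qed

section \<open>Logical noncontextuality and consistent global assignments\<close>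

(* The assignments with pb t = 1 for the largest admissible pb in logically_noncontextual. *)
definition consistent_assignment :: "nat \<Rightarrow> (nat \<Rightarrow> bool \<Rightarrow> bool \<Rightarrow> real) \<Rightarrow> bool list \<Rightarrow> bool" where
  "consistent_assignment n p t \<longleftrightarrow>
     length t = n \<and> (\<forall>k<n. 0 < p k (t ! k) (t ! ((k + 1) mod n)))"

lemma consistent_assignment_iff_rotated:
  assumes "length t = n"
  shows "consistent_assignment n p t \<longleftrightarrow>
    (\<forall>l<n. 0 < p ((j + l) mod n) (t ! ((j + l) mod n)) (t ! ((j + l + 1) mod n)))"
proof
  assume consistent: "consistent_assignment n p t"
  show "\<forall>l<n. 0 < p ((j + l) mod n) (t ! ((j + l) mod n)) (t ! ((j + l + 1) mod n))"
  proof (intro allI impI)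
    fix l assume "l < n"
    then have "(j + l) mod n < n" by simp
    with consistent have "0 < p ((j + l) mod n) (t ! ((j + l) mod n)) (t ! (((j + l) mod n + 1) mod n))"
      unfolding consistent_assignment_def by blast
    then show "0 < p ((j + l) mod n) (t ! ((j + l) mod n)) (t ! ((j + l + 1) mod n))"
      by (simp only: mod_add_left_eq)
  qed
next
  assume rotated: "\<forall>l<n. 0 < p ((j + l) mod n) (t ! ((j + l) mod n)) (t ! ((j + l + 1) mod n))"
  have "0 < p k (t ! k) (t ! ((k + 1) mod n))" if "k < n" for k
  proof -
    define l where "l = (k + n - j mod n) mod n"
    have "l < n" "(j + l) mod n = k"
      using that mod_rotate_inverse[OF that] by (auto simp: l_def)
    moreover have "(j + l + 1) mod n = (k + 1) mod n"
      using \<open>(j + l) mod n = k\<close> mod_add_left_eq[of "j + l" n 1] by simp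
    ultimately show ?thesis
      using rotated by auto
  qed
  with assms show "consistent_assignment n p t"
    unfolding consistent_assignment_def by blast
qed

lemma ex_assignment_through:
  assumes "2 \<le> n" and "i < n"
  shows "\<exists>t :: bool list. length t = n \<and> t ! i = x \<and> t ! ((i + 1) mod n) = y"
proof -
  obtain t :: "bool list" where "length t = n"
    and t: "\<forall>l<n. t ! ((i + 1 + l) mod n) = (if l = 0 then y else x)"
    using ex_list_rotated[of n "i + 1" "\<lambda>l. if l = 0 then y else x"] assms by auto
  moreover have "(i + 1 + (n - 1)) mod n = i"
    using assms by simp
  ultimately show ?thesis
    using t[rule_format, of 0] t[rule_format, of "n - 1"] assms by auto
qed

lemma logically_noncontextual_iff_indicator:
  assumes "2 \<le> n"
  shows "logically_noncontextual n p \<longleftrightarrow>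
    (\<exists>pb :: bool list \<Rightarrow> nat. (\<forall>t. pb t \<in> {0, 1}) \<and>
      (\<forall>i<n. \<forall>x y. (\<exists>t. length t = n \<and> t ! i = x \<and> t ! ((i + 1) mod n) = y \<and> pb t = 1)
                     \<longleftrightarrow> 0 < p i x y))"
proof -
  have "Max {pb t |t. length t = n \<and> t ! i = x \<and> t ! ((i + 1) mod n) = y} = supp_ind p i x y
      \<longleftrightarrow> ((\<exists>t. length t = n \<and> t ! i = x \<and> t ! ((i + 1) mod n) = y \<and> pb t = 1) \<longleftrightarrow> 0 < p i x y)"
    if "\<forall>t. pb t \<in> {0, 1}" and "i < n" for pb :: "bool list \<Rightarrow> nat" and i x y
  proof -
    have "Max {pb t |t. length t = n \<and> t ! i = x \<and> t ! ((i + 1) mod n) = y}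
        = (if \<exists>t. (length t = n \<and> t ! i = x \<and> t ! ((i + 1) mod n) = y) \<and> pb t = 1 then 1 else 0)"
      using that(1) ex_assignment_through[OF assms that(2)] by (rule Max_zero_one_valued)
    then show ?thesis
      unfolding supp_ind_def by simp
  qed
  then show ?thesis
    unfolding logically_noncontextual_def
    by (intro ex_cong1 conj_cong[OF refl] all_cong1 imp_cong[OF refl]) blast
qed

lemma logically_noncontextual_iff_extendable:
  assumes "2 \<le> n"
  shows "logically_noncontextual n p \<longleftrightarrow>
    (\<forall>i<n. \<forall>x y. 0 < p i x y \<longrightarrow>
       (\<exists>t. consistent_assignment n p t \<and> t ! i = x \<and> t ! ((i + 1) mod n) = y))"
    (is "_ \<longleftrightarrow> (\<forall>i<n. \<forall>x y. _ \<longrightarrow> ?extendable i x y)")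
  unfolding logically_noncontextual_iff_indicator[OF assms]
proof safe
  fix pb :: "bool list \<Rightarrow> nat" and i x y
  assume pb: "\<forall>i<n. \<forall>x y. (\<exists>t. length t = n \<and> t ! i = x \<and> t ! ((i + 1) mod n) = y \<and> pb t = 1)
                            \<longleftrightarrow> 0 < p i x y"
    and "i < n" and "0 < p i x y"
  then obtain t where t: "length t = n" "t ! i = x" "t ! ((i + 1) mod n) = y" "pb t = 1"
    by blast
  have "consistent_assignment n p t"
    unfolding consistent_assignment_def
  proof (intro conjI allI impI)
    fix k assume "k < n"
    with pb t(1,4) show "0 < p k (t ! k) (t ! ((k + 1) mod n))" by blast
  qed (fact t(1))
  with t show "?extendable i x y" by blast
next
  assume extendable: "\<forall>i<n. \<forall>x y. 0 < p i x y \<longrightarrow> ?extendable i x y"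
  define pb :: "bool list \<Rightarrow> nat" where
    "pb t = (if consistent_assignment n p t then 1 else 0)" for t
  have "(\<exists>t. length t = n \<and> t ! i = x \<and> t ! ((i + 1) mod n) = y \<and> pb t = 1) \<longleftrightarrow> 0 < p i x y"
    if "i < n" for i x y
  proof
    assume "\<exists>t. length t = n \<and> t ! i = x \<and> t ! ((i + 1) mod n) = y \<and> pb t = 1"
    with \<open>i < n\<close> show "0 < p i x y"
      unfolding pb_def consistent_assignment_def by (auto split: if_splits)
  next
    assume "0 < p i x y"
    with \<open>i < n\<close> extendable obtain t
      where "consistent_assignment n p t" "t ! i = x" "t ! ((i + 1) mod n) = y"
      by blast
    then show "\<exists>t. length t = n \<and> t ! i = x \<and> t ! ((i + 1) mod n) = y \<and> pb t = 1"
      unfolding pb_def consistent_assignment_def by auto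
  qed
  moreover have "\<forall>t. pb t \<in> {0, 1}"
    by (simp add: pb_def)
  ultimately show "\<exists>pb :: bool list \<Rightarrow> nat. (\<forall>t. pb t \<in> {0, 1}) \<and>
      (\<forall>i<n. \<forall>x y. (\<exists>t. length t = n \<and> t ! i = x \<and> t ! ((i + 1) mod n) = y \<and> pb t = 1)
                     \<longleftrightarrow> 0 < p i x y)"
    by blast
qed

section \<open>The cycle unrolled at a context\<close>

lemma behavior_nonneg:
  assumes "behavior n p" and "k < n"
  shows "0 \<le> p k x y"
  using assms unfolding behavior_def by blast

lemma nondisturbing_support_shift:
  assumes "behavior n p" and "nondisturbing n p" and "0 < n"
  shows "(\<exists>u. 0 < p (k mod n) u x) \<longleftrightarrow> (\<exists>z. 0 < p (Suc k mod n) x z)"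
proof -
  have "(\<Sum>u\<in>UNIV. p (k mod n) u x) = (\<Sum>z\<in>UNIV. p ((k mod n + 1) mod n) x z)"
    using assms(2,3) unfolding nondisturbing_def by simp
  also have "(k mod n + 1) mod n = Suc k mod n"
    by (simp add: mod_Suc_eq)
  finally have "0 < (\<Sum>u\<in>UNIV. p (k mod n) u x) \<longleftrightarrow> 0 < (\<Sum>z\<in>UNIV. p (Suc k mod n) x z)"
    by simp
  moreover have "0 \<le> p (k mod n) u x" "0 \<le> p (Suc k mod n) x z" for u z
    using behavior_nonneg[OF assms(1)] assms(3) by simp_all
  ultimately show ?thesis
    by (simp add: sum_pos_iff_ex_pos)
qed

(* Layer l is the context i + 1 + l (mod n); a walk from b through the layers 0, ..., n - 2
   that ends in a is closed up by the edge (a, b) of context i. *)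
definition unrolled :: "nat \<Rightarrow> (nat \<Rightarrow> bool \<Rightarrow> bool \<Rightarrow> real) \<Rightarrow> nat \<Rightarrow> nat \<Rightarrow> bool \<Rightarrow> bool \<Rightarrow> bool" where
  "unrolled n p i l x y \<longleftrightarrow> 0 < p ((i + 1 + l) mod n) x y"

lemma walk_of_consistent_assignment:
  assumes "consistent_assignment n p t" and "i < n" and "t ! i = a" and "t ! ((i + 1) mod n) = b"
  shows "\<exists>w. w 0 = b \<and> w (n - 1) = a \<and> (\<forall>k<n - 1. unrolled n p i k (w k) (w (Suc k)))"
proof -
  have "length t = n"
    using assms(1) by (simp add: consistent_assignment_def)
  define w where "w l = t ! ((i + 1 + l) mod n)" for l
  have "w 0 = b" "w (n - 1) = a"
    using assms(2-4) by (simp_all add: w_def)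
  moreover have "unrolled n p i k (w k) (w (Suc k))" if "k < n - 1" for k
    using assms(1) that consistent_assignment_iff_rotated[OF \<open>length t = n\<close>, of p "i + 1"]
    by (simp add: unrolled_def w_def)
  ultimately show ?thesis
    by blast
qed

lemma consistent_assignment_of_walk:
  assumes "i < n" and "0 < p i a b"
    and w: "w 0 = b" "w (n - 1) = a" "\<forall>k<n - 1. unrolled n p i k (w k) (w (Suc k))"
  shows "\<exists>t. consistent_assignment n p t \<and> t ! i = a \<and> t ! ((i + 1) mod n) = b"
proof -
  have "0 < n" and last: "(i + 1 + (n - 1)) mod n = i"
    using assms(1) by auto
  obtain t :: "bool list" where "length t = n" and t: "\<forall>l<n. t ! ((i + 1 + l) mod n) = w l"
    using ex_list_rotated[OF \<open>0 < n\<close>] by blast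
  have "t ! i = a" "t ! ((i + 1) mod n) = b"
    using t[rule_format, of "n - 1"] t[rule_format, of 0] w last \<open>0 < n\<close> by auto
  moreover have "0 < p ((i + 1 + l) mod n) (t ! ((i + 1 + l) mod n)) (t ! ((i + 1 + l + 1) mod n))"
    if "l < n" for l
  proof (cases "l = n - 1")
    case True
    then have "i + 1 + l + 1 = (i + 1) + n"
      using \<open>0 < n\<close> by simp
    then have "(i + 1 + l + 1) mod n = (i + 1) mod n"
      by (simp only: mod_add_self2)
    with True last assms(2) \<open>t ! i = a\<close> \<open>t ! ((i + 1) mod n) = b\<close> show ?thesis
      by simp
  next
    case False
    then have "Suc l < n" and "l < n - 1"
      using that by auto
    then have "t ! ((i + 1 + l + 1) mod n) = w (Suc l)"
      using t by auto
    with that w(3) t \<open>l < n - 1\<close> show ?thesis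
      by (simp add: unrolled_def)
  qed
  then have "consistent_assignment n p t"
    using consistent_assignment_iff_rotated[OF \<open>length t = n\<close>] by blast
  ultimately show ?thesis
    by blast
qed

lemma extendable_iff_reach_unrolled:
  assumes "i < n" and "0 < p i a b"
  shows "(\<exists>t. consistent_assignment n p t \<and> t ! i = a \<and> t ! ((i + 1) mod n) = b)
    \<longleftrightarrow> a \<in> reach (unrolled n p i) b (n - 1)"
proof
  assume "\<exists>t. consistent_assignment n p t \<and> t ! i = a \<and> t ! ((i + 1) mod n) = b"
  then obtain t where "consistent_assignment n p t" "t ! i = a" "t ! ((i + 1) mod n) = b"
    by blast
  from walk_of_consistent_assignment[OF this(1) assms(1) this(2,3)]
  show "a \<in> reach (unrolled n p i) b (n - 1)"
    unfolding reach_iff_walk .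
next
  assume "a \<in> reach (unrolled n p i) b (n - 1)"
  then obtain w where "w 0 = b" "w (n - 1) = a" "\<forall>k<n - 1. unrolled n p i k (w k) (w (Suc k))"
    unfolding reach_iff_walk by blast
  then show "\<exists>t. consistent_assignment n p t \<and> t ! i = a \<and> t ! ((i + 1) mod n) = b"
    by (rule consistent_assignment_of_walk[of i n p a b, OF assms])
qed

lemma layers_match_unrolled:
  assumes "behavior n p" and "nondisturbing n p" and "0 < n"
  shows "layers_match (unrolled n p i)"
  unfolding layers_match_def unrolled_def
  using nondisturbing_support_shift[OF assms, of "i + 1 + l" for l] by simp

lemma not_reach_unrolled_iff_forced_path:
  assumes "behavior n p" and "nondisturbing n p" and "i < n" and "0 < p i a b"
  shows "a \<notin> reach (unrolled n p i) b (n - 1)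
    \<longleftrightarrow> (\<exists>\<beta>. \<beta> 0 = b \<and> \<beta> (n - 1) = (\<not> a) \<and> forced_path (unrolled n p i) (n - 1) \<beta>)"
proof (rule not_reach_iff_forced_path)
  have "0 < n" using assms(3) by simp
  then show "layers_match (unrolled n p i)"
    using layers_match_unrolled[OF assms(1,2)] by blast
  show "\<exists>z. unrolled n p i 0 b z"
    using nondisturbing_support_shift[OF assms(1,2) \<open>0 < n\<close>, of i b] assms(3,4)
    by (auto simp: unrolled_def)
  show "\<exists>z. unrolled n p i (n - 1) a z"
    using assms(3,4) by (auto simp: unrolled_def)
qed

lemma forced_path_unrolled_iff:
  assumes "0 < n" and "\<forall>k<n. \<forall>x y. 0 \<le> p k x y"
  shows "forced_path (unrolled n p i) m \<beta>
    \<longleftrightarrow> (\<forall>k<m. p ((i + 1 + k) mod n) (\<beta> k) (\<not> \<beta> (Suc k)) = 0)"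
proof -
  have "0 \<le> p ((i + 1 + k) mod n) x y" for k x y
    using assms by simp
  then have "\<not> 0 < p ((i + 1 + k) mod n) x y \<longleftrightarrow> p ((i + 1 + k) mod n) x y = 0" for k x y
    by (metis order.not_eq_order_implies_strict order_less_irrefl)
  then show ?thesis
    unfolding forced_path_def unrolled_def by simp
qed

definition zero_chain :: "nat \<Rightarrow> (nat \<Rightarrow> bool \<Rightarrow> bool \<Rightarrow> real) \<Rightarrow> nat \<Rightarrow> bool \<Rightarrow> bool \<Rightarrow> (nat \<Rightarrow> bool) \<Rightarrow> bool" where
  "zero_chain n p i a b \<alpha> \<longleftrightarrow>
     p ((i + 1) mod n) b (\<alpha> 1) = 0 \<and>
     (\<forall>j\<in>{2..n - 2}. p ((i + j) mod n) (\<not> \<alpha> (j - 1)) (\<alpha> j) = 0) \<and>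
     p ((i + n - 1) mod n) (\<not> \<alpha> (n - 2)) a = 0"

lemma zero_chain_of_forced_path:
  assumes "3 \<le> n" and "\<beta> 0 = b" and "\<beta> (n - 1) = (\<not> a)"
    and forced: "\<forall>k<n - 1. p ((i + 1 + k) mod n) (\<beta> k) (\<not> \<beta> (Suc k)) = 0"
  shows "zero_chain n p i a b (\<lambda>j. \<not> \<beta> j)"
  unfolding zero_chain_def
proof (intro conjI ballI)
  show "p ((i + 1) mod n) b (\<not> \<beta> 1) = 0"
    using forced[rule_format, of 0] assms(1,2) by simp
next
  fix j assume "j \<in> {2..n - 2}"
  then have "j - 1 < n - 1" and "i + 1 + (j - 1) = i + j" and "Suc (j - 1) = j"
    by auto
  then show "p ((i + j) mod n) (\<not> \<not> \<beta> (j - 1)) (\<not> \<beta> j) = 0"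
    using forced[rule_format, of "j - 1"] by simp
next
  have "n - 2 < n - 1" and "i + 1 + (n - 2) = i + n - 1" and "Suc (n - 2) = n - 1"
    using assms(1) by auto
  then show "p ((i + n - 1) mod n) (\<not> \<not> \<beta> (n - 2)) a = 0"
    using forced[rule_format, of "n - 2"] assms(3) by simp
qed

lemma forced_path_of_zero_chain:
  assumes "3 \<le> n" and "zero_chain n p i a b \<alpha>"
  defines "\<beta> \<equiv> \<lambda>j. if j = 0 then b else if j = n - 1 then \<not> a else \<not> \<alpha> j"
  shows "\<forall>k<n - 1. p ((i + 1 + k) mod n) (\<beta> k) (\<not> \<beta> (Suc k)) = 0"
proof (intro allI impI)
  from assms(2) have first: "p ((i + 1) mod n) b (\<alpha> 1) = 0"
    and middle: "\<forall>j\<in>{2..n - 2}. p ((i + j) mod n) (\<not> \<alpha> (j - 1)) (\<alpha> j) = 0"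
    and last: "p ((i + n - 1) mod n) (\<not> \<alpha> (n - 2)) a = 0"
    unfolding zero_chain_def by blast+
  fix k assume "k < n - 1"
  then consider "k = 0" | "0 < k" "Suc k < n - 1" | "k = n - 2"
    by linarith
  then show "p ((i + 1 + k) mod n) (\<beta> k) (\<not> \<beta> (Suc k)) = 0"
  proof cases
    case 1
    with first assms(1) show ?thesis
      by (auto simp: \<beta>_def)
  next
    case 2
    then have "Suc k \<in> {2..n - 2}" and "i + 1 + k = i + Suc k"
      and "\<beta> k = (\<not> \<alpha> k)" and "\<beta> (Suc k) = (\<not> \<alpha> (Suc k))"
      by (auto simp: \<beta>_def)
    with middle[rule_format, of "Suc k"] show ?thesis
      by simp
  next
    case 3
    then have "i + 1 + k = i + n - 1" and "Suc k = n - 1" and "k \<noteq> 0"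
      using assms(1) by auto
    with last 3 show ?thesis
      by (simp add: \<beta>_def)
  qed
qed

lemma forced_path_unrolled_iff_zero_chain:
  assumes "3 \<le> n" and "\<forall>k<n. \<forall>x y. 0 \<le> p k x y"
  shows "(\<exists>\<beta>. \<beta> 0 = b \<and> \<beta> (n - 1) = (\<not> a) \<and> forced_path (unrolled n p i) (n - 1) \<beta>)
    \<longleftrightarrow> (\<exists>\<alpha>. zero_chain n p i a b \<alpha>)"
proof -
  have "0 < n"
    using assms(1) by simp
  note forced_iff = forced_path_unrolled_iff[OF this assms(2)]
  show ?thesis
  proof
    assume "\<exists>\<beta>. \<beta> 0 = b \<and> \<beta> (n - 1) = (\<not> a) \<and> forced_path (unrolled n p i) (n - 1) \<beta>"
    then obtain \<beta> where "\<beta> 0 = b" "\<beta> (n - 1) = (\<not> a)" "forced_path (unrolled n p i) (n - 1) \<beta>"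
      by blast
    from zero_chain_of_forced_path[OF assms(1) this(1,2) this(3)[unfolded forced_iff]]
    show "\<exists>\<alpha>. zero_chain n p i a b \<alpha>" by blast
  next
    assume "\<exists>\<alpha>. zero_chain n p i a b \<alpha>"
    then obtain \<alpha> where "zero_chain n p i a b \<alpha>" ..
    from forced_path_of_zero_chain[OF assms(1) this] assms(1)
    show "\<exists>\<beta>. \<beta> 0 = b \<and> \<beta> (n - 1) = (\<not> a) \<and> forced_path (unrolled n p i) (n - 1) \<beta>"
      unfolding forced_iff by (intro exI[of _ "\<lambda>j. if j = 0 then b else if j = n - 1 then \<not> a else \<not> \<alpha> j"]) simp
  qed
qed

theorem theorem2:
  fixes n :: nat and p :: "nat \<Rightarrow> bool \<Rightarrow> bool \<Rightarrow> real"
  assumes "n \<ge> 3" and "behavior n p" and "nondisturbing n p"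
  shows "logically_contextual n p \<longleftrightarrow>
    (\<exists>i<n. \<exists>a b. \<exists>\<alpha> :: nat \<Rightarrow> bool.
       p i a b > 0 \<and>
       p ((i + 1) mod n) b (\<alpha> 1) = 0 \<and>
       (\<forall>j\<in>{2..n - 2}. p ((i + j) mod n) (\<not> \<alpha> (j - 1)) (\<alpha> j) = 0) \<and>
       p ((i + n - 1) mod n) (\<not> \<alpha> (n - 2)) a = 0)"
proof -
  have "2 \<le> n" using assms(1) by simp
  have nonneg: "\<forall>k<n. \<forall>x y. 0 \<le> p k x y"
    using behavior_nonneg[OF assms(2)] by blast
  have "logically_contextual n p \<longleftrightarrow> (\<exists>i<n. \<exists>a b. 0 < p i a b \<and>
      \<not> (\<exists>t. consistent_assignment n p t \<and> t ! i = a \<and> t ! ((i + 1) mod n) = b))"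
    unfolding logically_contextual_def logically_noncontextual_iff_extendable[OF \<open>2 \<le> n\<close>]
    by blast
  also have "\<dots> \<longleftrightarrow> (\<exists>i<n. \<exists>a b. 0 < p i a b \<and> a \<notin> reach (unrolled n p i) b (n - 1))"
    by (intro ex_cong1 conj_cong[OF refl] arg_cong[where f = Not] extendable_iff_reach_unrolled)
      assumption+
  also have "\<dots> \<longleftrightarrow> (\<exists>i<n. \<exists>a b. 0 < p i a b \<and>
      (\<exists>\<beta>. \<beta> 0 = b \<and> \<beta> (n - 1) = (\<not> a) \<and> forced_path (unrolled n p i) (n - 1) \<beta>))"
    by (intro ex_cong1 conj_cong[OF refl] not_reach_unrolled_iff_forced_path[OF assms(2,3)])
      assumption+
  finally show ?thesis
    unfolding forced_path_unrolled_iff_zero_chain[OF assms(1) nonneg] zero_chain_def by blast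
qed

end
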